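(* For every $M\ge1$ and every $\mathbf p=(p_1,\dots,p_M)\in(0,1)^M$, $$\lim_{\kappa\to\infty}\chi(\mathbf p;\kappa)=\mathrm{Sto}(\mathbf p)=1-\Phi\Big(\frac{1}{\sqrt M}\sum_{i=1}^M\Phi^{-1}(1-p_i)\Big).$$
   Context: $F_\chi(x;\kappa)$ denotes the CDF of the $\chi^2$ distribution with $\kappa>0$ degrees of freedom, $F_\chi(x;\kappa)=\int_0^x\frac{t^{\kappa/2-1}e^{-t/2}}{2^{\kappa/2}\Gamma(\kappa/2)}dt$, and $F_\chi^{-1}(\cdot;\kappa)$ its quantile function. The chi-squared quantile pooled $p$-value is $\chi(\mathbf p;\kappa)=1-F_\chi\big(\sum_{i=1}^M F_\chi^{-1}(1-p_i;\kappa);\,M\kappa\big)$. $\Phi$ is the standard normal CDF. *)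

theory Defs
  imports "HOL-Probability.Probability"
begin

definition chi2_density :: "real \<Rightarrow> real \<Rightarrow> real" where
  "chi2_density \<kappa> t =
     (if t > 0 then t powr (\<kappa>/2 - 1) * exp (- t/2) / (2 powr (\<kappa>/2) * Gamma (\<kappa>/2)) else 0)"

definition chi2_cdf :: "real \<Rightarrow> real \<Rightarrow> real" where
  "chi2_cdf \<kappa> x = (LBINT t:{0..x}. chi2_density \<kappa> t)"

definition chi2_quantile :: "real \<Rightarrow> real \<Rightarrow> real" where
  "chi2_quantile \<kappa> q = Inf {x. q \<le> chi2_cdf \<kappa> x}"

definition chi_pool :: "nat \<Rightarrow> (nat \<Rightarrow> real) \<Rightarrow> real \<Rightarrow> real" where
  "chi_pool M p \<kappa> =
     1 - chi2_cdf (real M * \<kappa>) (\<Sum>i=1..M. chi2_quantile \<kappa> (1 - p i))"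

definition Phi :: "real \<Rightarrow> real" where
  "Phi x = (LBINT t:{..x}. std_normal_density t)"

definition Phi_inv :: "real \<Rightarrow> real" where
  "Phi_inv q = Inf {x. q \<le> Phi x}"

definition Sto :: "nat \<Rightarrow> (nat \<Rightarrow> real) \<Rightarrow> real" where
  "Sto M p = 1 - Phi ((1 / sqrt (real M)) * (\<Sum>i=1..M. Phi_inv (1 - p i)))"

end

theory Submission
  imports Defs "HOL-Real_Asymp.Real_Asymp"
begin

(* Write the chi-squared quantile of 1 - p_i with kappa degrees of freedom as
   kappa + sqrt (2 kappa) w_i(kappa). The standardized distribution functions
   F(kappa + sqrt (2 kappa) z; kappa) tend to Phi z (a central limit theorem for the chi-squared
   family); as Phi is continuous and strictly increasing, the standardized quantiles follow:
   w_i(kappa) --> Phi_inv (1 - p_i). The sum of the M quantiles is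
   M kappa + sqrt (2 M kappa) W(kappa) with W = (1 / sqrt M) * sum w_i, and since the distribution
   functions are monotone and Phi is continuous, F(M kappa + sqrt (2 M kappa) W(kappa); M kappa)
   tends to Phi (lim W), which is the Stouffer value.

   The central limit theorem is proved on densities: in the variable u = (t - kappa) / sqrt (2 kappa)
   the density is proportional to (1 + u/s) powr (s^2 - 1) * exp (- s u), s = sqrt (kappa/2), which
   tends to exp (- u^2/2) and is bounded by exp (2 - |u|) for kappa > 2. Dominated convergence for
   both the truncated and the total integral of this kernel yields the limit without ever
   evaluating the normalizing constant. *)

section \<open>Quantiles of converging distribution functions\<close>

lemma cInf_superlevel_le:
  fixes F :: "'a::conditionally_complete_linorder \<Rightarrow> 'b::linorder"
  assumes "mono F" "F b < q" "q \<le> F x"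
  shows "Inf {x. q \<le> F x} \<le> x"
proof (rule cInf_lower)
  show "bdd_below {x. q \<le> F x}"
  proof (rule bdd_belowI)
    fix t
    assume "t \<in> {x. q \<le> F x}"
    show "b \<le> t"
    proof (rule ccontr)
      assume "\<not> b \<le> t"
      then have "F t \<le> F b" using assms(1) by (simp add: monoD)
      with \<open>t \<in> {x. q \<le> F x}\<close> assms(2) show False by simp
    qed
  qed
qed (use assms(3) in simp)

lemma le_cInf_superlevel:
  fixes F :: "'a::conditionally_complete_linorder \<Rightarrow> 'b::linorder"
  assumes "mono F" "F x < q" "q \<le> F y"
  shows "x \<le> Inf {x. q \<le> F x}"
proof (rule cInf_greatest)
  show "{x. q \<le> F x} \<noteq> {}" using assms(3) by auto
  fix t
  assume "t \<in> {x. q \<le> F x}"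
  show "x \<le> t"
  proof (rule ccontr)
    assume "\<not> x \<le> t"
    then have "F t \<le> F x" using assms(1) by (simp add: monoD)
    with \<open>t \<in> {x. q \<le> F x}\<close> assms(2) show False by simp
  qed
qed

lemma standardized_quantile_tendsto:
  fixes F :: "'a \<Rightarrow> real \<Rightarrow> real"
  assumes mono: "\<forall>\<^sub>F k in net. mono (F k)"
    and scale: "\<forall>\<^sub>F k in net. 0 < b k"
    and lim: "\<And>x. ((\<lambda>k. F k (a k + b k * x)) \<longlongrightarrow> G x) net"
    and below: "\<And>e. 0 < e \<Longrightarrow> G (z - e) < q"
    and above: "\<And>e. 0 < e \<Longrightarrow> q < G (z + e)"
  shows "((\<lambda>k. (Inf {x. q \<le> F k x} - a k) / b k) \<longlongrightarrow> z) net"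
proof (rule tendstoI)
  fix e :: real
  assume "0 < e"
  have "\<forall>\<^sub>F k in net. F k (a k + b k * (z - e / 2)) < q"
    using \<open>0 < e\<close> by (intro order_tendstoD(2)[OF lim] below) simp
  moreover have "\<forall>\<^sub>F k in net. q < F k (a k + b k * (z + e / 2))"
    using \<open>0 < e\<close> by (intro order_tendstoD(1)[OF lim] above) simp
  ultimately show "\<forall>\<^sub>F k in net. dist ((Inf {x. q \<le> F k x} - a k) / b k) z < e"
    using mono scale
  proof eventually_elim
    case (elim k)
    have "Inf {x. q \<le> F k x} \<le> a k + b k * (z + e / 2)"
      using elim by (intro cInf_superlevel_le) auto
    then have "(Inf {x. q \<le> F k x} - a k) / b k \<le> z + e / 2"
      using elim(4) by (simp add: pos_divide_le_eq mult.commute)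
    moreover have "a k + b k * (z - e / 2) \<le> Inf {x. q \<le> F k x}"
      using elim by (intro le_cInf_superlevel[where y = "a k + b k * (z + e / 2)"]) auto
    then have "z - e / 2 \<le> (Inf {x. q \<le> F k x} - a k) / b k"
      using elim(4) by (simp add: pos_le_divide_eq mult.commute)
    ultimately show ?case using \<open>0 < e\<close> by (simp add: dist_real_def abs_less_iff)
  qed
qed

lemma standardized_cdf_tendsto_compose:
  fixes F :: "'a \<Rightarrow> real \<Rightarrow> real"
  assumes mono: "\<forall>\<^sub>F k in net. mono (F k)"
    and scale: "\<forall>\<^sub>F k in net. 0 \<le> b k"
    and lim: "\<And>x. ((\<lambda>k. F k (a k + b k * x)) \<longlongrightarrow> G x) net"
    and w: "(w \<longlongrightarrow> w0) net"
    and cont: "isCont G w0"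
  shows "((\<lambda>k. F k (a k + b k * w k)) \<longlongrightarrow> G w0) net"
proof (rule tendstoI)
  fix e :: real
  assume "0 < e"
  obtain d where d: "0 < d" and G_near: "\<And>x. \<bar>x - w0\<bar> \<le> d \<Longrightarrow> \<bar>G x - G w0\<bar> < e / 2"
  proof -
    obtain s where "0 < s" and "\<And>x. dist x w0 < s \<Longrightarrow> dist (G x) (G w0) < e / 2"
      using cont \<open>0 < e\<close> unfolding continuous_at_eps_delta by (meson half_gt_zero)
    then show ?thesis by (intro that[of "s / 2"]) (auto simp: dist_real_def)
  qed
  have "\<forall>\<^sub>F k in net. F k (a k + b k * (w0 + d)) < G (w0 + d) + e / 2"
    using \<open>0 < e\<close> by (intro order_tendstoD(2)[OF lim]) simp
  moreover have "\<forall>\<^sub>F k in net. G (w0 - d) - e / 2 < F k (a k + b k * (w0 - d))"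
    using \<open>0 < e\<close> by (intro order_tendstoD(1)[OF lim]) simp
  moreover have "\<forall>\<^sub>F k in net. dist (w k) w0 < d" using w d by (rule tendstoD)
  ultimately show "\<forall>\<^sub>F k in net. dist (F k (a k + b k * w k)) (G w0) < e"
    using mono scale
  proof eventually_elim
    case (elim k)
    have "w0 - d \<le> w k" "w k \<le> w0 + d" using elim(3) by (auto simp: dist_real_def)
    then have "F k (a k + b k * (w0 - d)) \<le> F k (a k + b k * w k)"
              "F k (a k + b k * w k) \<le> F k (a k + b k * (w0 + d))"
      using elim(4,5) by (auto intro!: monoD[of "F k"] mult_left_mono)
    moreover have "\<bar>G (w0 + d) - G w0\<bar> < e / 2" "\<bar>G (w0 - d) - G w0\<bar> < e / 2"
      using G_near[of "w0 + d"] G_near[of "w0 - d"] d by auto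
    ultimately show ?case using elim(1,2) unfolding dist_real_def abs_less_iff by linarith
  qed
qed

section \<open>The standard normal distribution function\<close>

lemma Phi_eq_integral: "Phi x = (\<integral>t. indicator {..x} t * std_normal_density t \<partial>lborel)"
  by (simp add: Phi_def set_lebesgue_integral_def)

lemma integrable_indicator_std_normal_density [simp]:
  "A \<in> sets borel \<Longrightarrow> integrable lborel (\<lambda>t. indicator A t * std_normal_density t)"
  using integrable_mult_indicator[of A lborel std_normal_density] by simp

lemma Phi_diff:
  assumes "x \<le> y"
  shows "Phi y - Phi x = (\<integral>t. indicator {x<..y} t * std_normal_density t \<partial>lborel)"
proof -
  have "Phi y = (\<integral>t. indicator {..x} t * std_normal_density t
                    + indicator {x<..y} t * std_normal_density t \<partial>lborel)"
    unfolding Phi_eq_integral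
    by (rule Bochner_Integration.integral_cong) (use assms in \<open>auto simp: indicator_def\<close>)
  also have "\<dots> = Phi x + (\<integral>t. indicator {x<..y} t * std_normal_density t \<partial>lborel)"
    unfolding Phi_eq_integral by (rule Bochner_Integration.integral_add) auto
  finally show ?thesis by simp
qed

lemma std_normal_density_le_one: "std_normal_density t \<le> 1"
proof -
  have "exp (- t\<^sup>2 / 2) \<le> 1" by simp
  moreover have "1 \<le> sqrt (2 * pi)" using pi_gt3 by (simp add: real_le_rsqrt)
  ultimately have "exp (- t\<^sup>2 / 2) \<le> sqrt (2 * pi)" by linarith
  then show ?thesis
    unfolding std_normal_density_def by (simp add: divide_le_eq_1)
qed

lemma Phi_diff_bounds:
  assumes "x \<le> y"
  shows "std_normal_density (\<bar>x\<bar> + \<bar>y\<bar>) * (y - x) \<le> Phi y - Phi x"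
    and "Phi y - Phi x \<le> y - x"
proof -
  have const: "(\<integral>t. indicator {x<..y} t * c \<partial>lborel) = c * (y - x)" for c :: real
    using assms by (simp add: mult.commute)
  have integrable_const: "integrable lborel (\<lambda>t. indicator {x<..y} t * c)" for c :: real
    using assms by (intro integrable_mult_left integrable_real_indicator) auto
  have "std_normal_density (\<bar>x\<bar> + \<bar>y\<bar>) \<le> std_normal_density t" if "t \<in> {x<..y}" for t
  proof -
    have "t\<^sup>2 \<le> (\<bar>x\<bar> + \<bar>y\<bar>)\<^sup>2"
      using that by (subst abs_le_square_iff[symmetric]) auto
    then show ?thesis unfolding std_normal_density_def by (intro mult_left_mono) auto
  qed
  then have "(\<integral>t. indicator {x<..y} t * std_normal_density (\<bar>x\<bar> + \<bar>y\<bar>) \<partial>lborel)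
             \<le> (\<integral>t. indicator {x<..y} t * std_normal_density t \<partial>lborel)"
    by (intro integral_mono integrable_const integrable_indicator_std_normal_density)
       (auto simp: indicator_def)
  then show "std_normal_density (\<bar>x\<bar> + \<bar>y\<bar>) * (y - x) \<le> Phi y - Phi x"
    by (simp only: const Phi_diff[OF assms])
  have "(\<integral>t. indicator {x<..y} t * std_normal_density t \<partial>lborel)
        \<le> (\<integral>t. indicator {x<..y} t * 1 \<partial>lborel)"
    by (intro integral_mono integrable_const integrable_indicator_std_normal_density)
       (auto simp: indicator_def std_normal_density_le_one)
  then show "Phi y - Phi x \<le> y - x"
    by (simp only: const Phi_diff[OF assms] mult_1)
qed

lemma strict_mono_Phi: "strict_mono Phi"
proof (rule strict_monoI)
  fix x y :: real
  assume "x < y"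
  then show "Phi x < Phi y"
    using Phi_diff_bounds(1)[of x y] normal_density_pos[of 1 0 "\<bar>x\<bar> + \<bar>y\<bar>"]
    by (smt (verit) mult_pos_pos)
qed

lemma Phi_lipschitz: "\<bar>Phi y - Phi x\<bar> \<le> \<bar>y - x\<bar>"
  using Phi_diff_bounds(2)[of x y] Phi_diff_bounds(2)[of y x]
    strict_mono_mono[OF strict_mono_Phi, THEN monoD, of x y]
    strict_mono_mono[OF strict_mono_Phi, THEN monoD, of y x]
  by (cases "x \<le> y") auto

lemma isCont_Phi: "isCont Phi x"
proof -
  have "1-lipschitz_on UNIV Phi"
    by (rule lipschitz_onI) (auto simp: dist_real_def Phi_lipschitz)
  then show ?thesis
    using lipschitz_on_continuous_on continuous_on_eq_continuous_at open_UNIV by blast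
qed

lemma Phi_at_top: "(Phi \<longlongrightarrow> 1) at_top"
proof -
  have "((\<lambda>x. \<integral>t. indicator {..x} t * std_normal_density t \<partial>lborel)
        \<longlongrightarrow> (\<integral>t. std_normal_density t \<partial>lborel)) at_top"
  proof (rule integral_dominated_convergence_at_top[where w = std_normal_density])
    show "AE t in lborel. ((\<lambda>x. indicator {..x} t * std_normal_density t)
            \<longlongrightarrow> std_normal_density t) at_top"
    proof (rule AE_I2, rule tendsto_eventually)
      fix t :: real
      show "\<forall>\<^sub>F x in at_top. indicator {..x} t * std_normal_density t = std_normal_density t"
        using eventually_ge_at_top[of t] by eventually_elim auto
    qed
  qed (auto simp: indicator_def)
  then show ?thesis unfolding Phi_eq_integral[abs_def] by simp
qed

lemma Phi_at_bot: "(Phi \<longlongrightarrow> 0) at_bot"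
proof -
  have "((\<lambda>x. \<integral>t. indicator {..-x} t * std_normal_density t \<partial>lborel)
        \<longlongrightarrow> (\<integral>(t::real). 0 \<partial>lborel)) at_top"
  proof (rule integral_dominated_convergence_at_top[where w = std_normal_density and f = "\<lambda>_. 0"
        and s = "\<lambda>x t. indicator {..-x} t * std_normal_density t"])
    show "AE t in lborel. ((\<lambda>x. indicator {..-x} t * std_normal_density t) \<longlongrightarrow> 0) at_top"
    proof (rule AE_I2, rule tendsto_eventually)
      fix t :: real
      show "\<forall>\<^sub>F x in at_top. indicator {..-x} t * std_normal_density t = 0"
        using eventually_gt_at_top[of "-t"] by eventually_elim auto
    qed
  qed (auto simp: indicator_def)
  then show ?thesis unfolding filterlim_at_bot_mirror Phi_eq_integral[abs_def] by simp
qed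

lemma Phi_inv_bounds:
  assumes "0 < q" "q < 1" "0 < e"
  shows "Phi (Phi_inv q - e) < q" and "q < Phi (Phi_inv q + e)"
proof -
  have mono: "mono Phi" by (rule strict_mono_mono[OF strict_mono_Phi])
  obtain b where b: "Phi b < q"
    using order_tendstoD(2)[OF Phi_at_bot assms(1)]
    by (metis eventually_happens' trivial_limit_at_bot_linorder)
  obtain y where y: "q \<le> Phi y"
    using order_tendstoD(1)[OF Phi_at_top assms(2)]
    by (metis eventually_happens' trivial_limit_at_top_linorder less_imp_le)
  show "Phi (Phi_inv q - e) < q"
  proof (rule ccontr)
    assume "\<not> Phi (Phi_inv q - e) < q"
    then have "Phi_inv q \<le> Phi_inv q - e"
      unfolding Phi_inv_def by (intro cInf_superlevel_le[OF mono b]) simp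
    with assms(3) show False by simp
  qed
  show "q < Phi (Phi_inv q + e)"
  proof (rule ccontr)
    assume "\<not> q < Phi (Phi_inv q + e)"
    then have "Phi (Phi_inv q + e / 2) < q"
      using strict_mono_Phi[THEN strict_monoD, of "Phi_inv q + e / 2" "Phi_inv q + e"] assms(3) by simp
    then have "Phi_inv q + e / 2 \<le> Phi_inv q"
      unfolding Phi_inv_def by (rule le_cInf_superlevel[OF mono _ y])
    with assms(3) show False by simp
  qed
qed

section \<open>The chi-squared distribution in standardized coordinates\<close>

lemma chi2_density_nonneg: "0 < \<kappa> \<Longrightarrow> 0 \<le> chi2_density \<kappa> t"
  by (simp add: chi2_density_def)

lemma has_bochner_integral_chi2_density:
  assumes "0 < \<kappa>"
  shows "has_bochner_integral lborel (chi2_density \<kappa>) 1"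
proof -
  define g where "g t = indicator {0..} t * t powr (\<kappa>/2 - 1) / exp t" for t :: real
  have [measurable]: "g \<in> borel_measurable borel" unfolding g_def[abs_def] by measurable
  have Gamma_pos: "0 < Gamma (\<kappa>/2)" using assms by simp
  have "has_bochner_integral lborel g (Gamma (\<kappa>/2))"
    using Gamma_conv_nn_integral_real[of "\<kappa>/2"] assms Gamma_pos
    by (intro has_bochner_integral_nn_integral) (auto simp: g_def)
  then have "has_bochner_integral lborel (\<lambda>x. g (0 + 1/2 * x)) (Gamma (\<kappa>/2) /\<^sub>R \<bar>1/2\<bar>)"
    by (subst lborel_has_bochner_integral_real_affine_iff[symmetric]) auto
  then have "has_bochner_integral lborel (\<lambda>x. 1 / (2 * Gamma (\<kappa>/2)) * g (0 + 1/2 * x))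
               (1 / (2 * Gamma (\<kappa>/2)) * (2 * Gamma (\<kappa>/2)))"
    by (intro has_bochner_integral_mult_right) simp
  moreover have "1 / (2 * Gamma (\<kappa>/2)) * g (0 + 1/2 * x) = chi2_density \<kappa> x" for x
  proof (cases "0 < x")
    case True
    have "(x/2) powr (\<kappa>/2 - 1) = x powr (\<kappa>/2 - 1) / 2 powr (\<kappa>/2 - 1)" by (rule powr_divide)
    moreover have "2 powr (\<kappa>/2) = 2 powr (\<kappa>/2 - 1) * 2"
      using powr_add[of "2::real" "\<kappa>/2 - 1" 1] by simp
    moreover have "exp (- x / 2) = 1 / exp (x/2)" by (simp add: exp_minus field_simps)
    ultimately show ?thesis using True Gamma_pos by (simp add: chi2_density_def g_def field_simps)
  qed (auto simp: chi2_density_def g_def indicator_def)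
  ultimately show ?thesis using Gamma_pos by simp
qed

lemma mono_chi2_cdf:
  assumes "0 < \<kappa>"
  shows "mono (chi2_cdf \<kappa>)"
proof (rule monoI)
  fix x y :: real
  assume "x \<le> y"
  have "integrable lborel (chi2_density \<kappa>)"
    using has_bochner_integral_chi2_density[OF assms] by (simp add: has_bochner_integral_iff)
  then have integrable: "integrable lborel (\<lambda>t. indicator A t * chi2_density \<kappa> t)"
    if "A \<in> sets borel" for A
    using integrable_mult_indicator[of A lborel "chi2_density \<kappa>"] that by simp
  show "chi2_cdf \<kappa> x \<le> chi2_cdf \<kappa> y"
    unfolding chi2_cdf_def set_lebesgue_integral_def real_scaleR_def
    by (rule integral_mono[OF integrable integrable])
       (use \<open>x \<le> y\<close> chi2_density_nonneg[OF assms] in \<open>auto simp: indicator_def\<close>)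
qed

(* Shape and normalizing factor of the density of (X - kappa) / sqrt (2 kappa), X chi-squared with
   kappa degrees of freedom. *)
definition chi2_kernel :: "real \<Rightarrow> real \<Rightarrow> real" where
  "chi2_kernel \<kappa> u =
     (if - sqrt (\<kappa>/2) < u
      then (1 + u / sqrt (\<kappa>/2)) powr (\<kappa>/2 - 1) * exp (- sqrt (\<kappa>/2) * u) else 0)"

definition chi2_kernel_const :: "real \<Rightarrow> real" where
  "chi2_kernel_const \<kappa> = sqrt (\<kappa>/2) * (\<kappa>/2) powr (\<kappa>/2 - 1) * exp (- (\<kappa>/2)) / Gamma (\<kappa>/2)"

lemma borel_measurable_chi2_kernel [measurable]: "chi2_kernel \<kappa> \<in> borel_measurable borel"
  unfolding chi2_kernel_def[abs_def] by measurable

lemma chi2_density_standardized: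
  assumes "0 < \<kappa>"
  shows "sqrt (2 * \<kappa>) * chi2_density \<kappa> (\<kappa> + sqrt (2 * \<kappa>) * u)
           = chi2_kernel_const \<kappa> * chi2_kernel \<kappa> u"
proof -
  define s where "s = sqrt (\<kappa>/2)"
  define a where "a = \<kappa>/2"
  have s: "0 < s" "s * s = a" using assms by (simp_all add: s_def a_def)
  have sqrt_2\<kappa>: "sqrt (2 * \<kappa>) = 2 * s"
    using s by (intro real_sqrt_unique) (auto simp: power2_eq_square a_def)
  have arg: "\<kappa> + 2 * s * u = 2 * (s * (s + u))" using s(2) by (simp add: a_def algebra_simps)
  show ?thesis
  proof (cases "- s < u")
    case True
    then have pos: "0 < s * (s + u)" using s by simp
    have powr_mult_arg: "(2 * (s * (s + u))) powr (a - 1) = 2 powr (a - 1) * (s * (s + u)) powr (a - 1)"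
      by (rule powr_mult)
    have powr_rescaled: "a powr (a - 1) * (1 + u / s) powr (a - 1) = (s * (s + u)) powr (a - 1)"
    proof -
      have "a * (1 + u / s) = s * (s + u)" using s by (simp add: field_simps flip: s(2))
      then show ?thesis by (metis powr_mult)
    qed
    have powr_two: "2 powr a = 2 powr (a - 1) * 2" using powr_add[of "2::real" "a - 1" 1] by simp
    have exp_arg: "exp (- (2 * (s * (s + u))) / 2) = exp (- a) * exp (- s * u)"
      by (simp add: exp_add[symmetric] flip: s(2)) (simp add: algebra_simps)
    have "0 < Gamma a" using assms by (simp add: a_def)
    have "2 * s * chi2_density \<kappa> (\<kappa> + 2 * s * u)
        = 2 * s * ((2 * (s * (s + u))) powr (a - 1) * exp (- (2 * (s * (s + u))) / 2)
                   / (2 powr a * Gamma a))"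
      unfolding arg using pos by (simp add: chi2_density_def a_def)
    also have "\<dots> = s * (a powr (a - 1) * (1 + u / s) powr (a - 1)) * (exp (- a) * exp (- s * u))
                     / Gamma a"
      unfolding powr_mult_arg powr_rescaled powr_two exp_arg using \<open>0 < Gamma a\<close> by (simp add: field_simps)
    also have "\<dots> = chi2_kernel_const \<kappa> * chi2_kernel \<kappa> u"
      using True unfolding chi2_kernel_const_def chi2_kernel_def s_def[symmetric]
      unfolding a_def[symmetric] by simp
    finally show ?thesis by (simp add: sqrt_2\<kappa>)
  next
    case False
    then have "\<kappa> + 2 * s * u \<le> 0" using arg s by (simp add: mult_nonneg_nonpos)
    then have "chi2_density \<kappa> (\<kappa> + sqrt (2 * \<kappa>) * u) = 0"
      by (simp add: sqrt_2\<kappa> chi2_density_def)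
    moreover have "chi2_kernel \<kappa> u = 0" using False by (simp add: chi2_kernel_def s_def)
    ultimately show ?thesis by simp
  qed
qed

lemma integral_chi2_density_standardized:
  assumes "0 < \<kappa>"
  shows "(\<integral>t. g t * chi2_density \<kappa> t \<partial>lborel)
           = chi2_kernel_const \<kappa> * (\<integral>u. g (\<kappa> + sqrt (2 * \<kappa>) * u) * chi2_kernel \<kappa> u \<partial>lborel)"
proof -
  have "(\<integral>t. g t * chi2_density \<kappa> t \<partial>lborel)
        = \<bar>sqrt (2 * \<kappa>)\<bar> *\<^sub>R (\<integral>u. g (\<kappa> + sqrt (2 * \<kappa>) * u)
                                     * chi2_density \<kappa> (\<kappa> + sqrt (2 * \<kappa>) * u) \<partial>lborel)"
    using assms by (intro lborel_integral_real_affine) simp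
  also have "\<dots> = (\<integral>u. chi2_kernel_const \<kappa> * (g (\<kappa> + sqrt (2 * \<kappa>) * u) * chi2_kernel \<kappa> u) \<partial>lborel)"
  proof -
    have "\<bar>sqrt (2 * \<kappa>)\<bar> * (g (\<kappa> + sqrt (2 * \<kappa>) * u) * chi2_density \<kappa> (\<kappa> + sqrt (2 * \<kappa>) * u))
            = chi2_kernel_const \<kappa> * (g (\<kappa> + sqrt (2 * \<kappa>) * u) * chi2_kernel \<kappa> u)" for u
      using chi2_density_standardized[OF assms, of u] assms by (simp add: mult.left_commute)
    then show ?thesis by (simp only: real_scaleR_def flip: integral_mult_right_zero)
  qed
  finally show ?thesis by simp
qed

lemma chi2_cdf_standardized:
  assumes "0 < \<kappa>"
  shows "chi2_cdf \<kappa> (\<kappa> + sqrt (2 * \<kappa>) * z)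
           = chi2_kernel_const \<kappa> * (\<integral>u. indicator {..z} u * chi2_kernel \<kappa> u \<partial>lborel)"
proof -
  have "indicator {0..\<kappa> + sqrt (2 * \<kappa>) * z} (\<kappa> + sqrt (2 * \<kappa>) * u) * chi2_kernel \<kappa> u
          = indicator {..z} u * chi2_kernel \<kappa> u" (is "?lhs u = ?rhs u") for u
  proof (cases "0 \<le> \<kappa> + sqrt (2 * \<kappa>) * u")
    case True
    then show ?thesis using assms by (auto simp: indicator_def)
  next
    case False
    then have "chi2_kernel_const \<kappa> * chi2_kernel \<kappa> u = 0"
      using chi2_density_standardized[OF assms, of u] by (simp add: chi2_density_def)
    moreover have "0 < chi2_kernel_const \<kappa>" using assms by (simp add: chi2_kernel_const_def)
    ultimately show ?thesis by simp
  qed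
  then have "(\<lambda>u. ?lhs u) = ?rhs" by (rule ext)
  then show ?thesis
    unfolding chi2_cdf_def set_lebesgue_integral_def real_scaleR_def
      integral_chi2_density_standardized[OF assms] by simp
qed

lemma chi2_kernel_normalized:
  assumes "0 < \<kappa>"
  shows "chi2_kernel_const \<kappa> * (\<integral>u. chi2_kernel \<kappa> u \<partial>lborel) = 1"
  using integral_chi2_density_standardized[OF assms, of "\<lambda>_. 1"]
    has_bochner_integral_chi2_density[OF assms]
  by (simp add: has_bochner_integral_iff)

lemma ln_le_div_add:
  fixes y c :: real
  assumes "0 < y" "0 < c"
  shows "ln y \<le> y / c + c - 2"
proof -
  have "ln y = ln (y / c) + ln c" using assms by (simp add: ln_div)
  also have "\<dots> \<le> (y / c - 1) + (c - 1)"
    using assms by (intro add_mono ln_le_minus_one) auto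
  finally show ?thesis by simp
qed

lemma ln_one_plus_div_bound:
  fixes s u :: real
  assumes "1 < s" "- s < u"
  shows "(s * s - 1) * ln (1 + u / s) - s * u \<le> 2 - \<bar>u\<bar>"
proof -
  define y where "y = 1 + u / s"
  have s0: "0 < s" using assms(1) by simp
  have inv_s: "0 < 1/s" "1/s < 1" using assms(1) by simp_all
  have tangent_points: "0 < 1 + 1/s" "0 < 1 - 1/s" using assms(1) s0 by (simp_all add: field_simps)
  have y: "0 < y" using assms s0 by (simp add: y_def field_simps)
  have "1 * 1 \<le> s * s" using assms(1) by (intro mult_mono) auto
  then have coeff: "0 \<le> s * s - 1" by simp
  \<comment> \<open>Tangent lines of \<open>ln\<close> at \<open>y = 1 \<plusminus> 1/s\<close>, i.e. at \<open>u = \<plusminus>1\<close>.\<close>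
  have "y / (1 + 1/s) = (s + u) / (s + 1)"
  proof -
    have "y = (s + u) / s" "1 + 1/s = (s + 1) / s" using s0 by (simp_all add: y_def field_simps)
    then show ?thesis using s0 by simp
  qed
  moreover have "(s * s - 1) * ln y \<le> (s * s - 1) * (y / (1 + 1/s) + (1 + 1/s) - 2)"
    using y tangent_points by (intro mult_left_mono ln_le_div_add coeff)
  ultimately have "(s * s - 1) * ln y \<le> (s * s - 1) * ((s + u) / (s + 1) + (1 + 1/s) - 2)"
    by simp
  also have "\<dots> = (s * s - 1) * ((s + u) / (s + 1)) + (s * s - 1) * (1/s - 1)"
    by (simp add: algebra_simps)
  also have "(s * s - 1) * ((s + u) / (s + 1)) = (s - 1) * (s + u)"
    using s0 by (simp add: field_simps)
  also have "(s - 1) * (s + u) + (s * s - 1) * (1/s - 1) = s * u + 1 - u - 1/s"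
    using s0 by (simp add: field_simps)
  finally have right: "(s * s - 1) * ln y - s * u \<le> 1 - u" using inv_s by linarith
  have "(s * s - 1) * ln y \<le> (s * s - 1) * (y / (1 - 1/s) + (1 - 1/s) - 2)"
    using y tangent_points by (intro mult_left_mono ln_le_div_add coeff)
  also have "\<dots> = s * u + 1 + u + 1/s"
    using assms(1) s0 by (simp add: y_def field_simps)
  finally have left: "(s * s - 1) * ln y - s * u \<le> 2 + u" using inv_s by linarith
  from left right show ?thesis unfolding y_def by linarith
qed

lemma chi2_kernel_le:
  assumes "2 < \<kappa>"
  shows "chi2_kernel \<kappa> u \<le> exp (2 - \<bar>u\<bar>)"
proof (cases "- sqrt (\<kappa>/2) < u")
  case True
  define s where "s = sqrt (\<kappa>/2)"
  have s: "1 < s" "s * s = \<kappa>/2" using assms by (simp_all add: s_def real_less_rsqrt)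
  have "0 < 1 + u / s" using True s by (simp add: s_def[symmetric] field_simps)
  then have "chi2_kernel \<kappa> u = exp ((s * s - 1) * ln (1 + u / s) - s * u)"
    using True by (simp add: chi2_kernel_def powr_def mult_exp_exp s(2) flip: s_def)
  also have "\<dots> \<le> exp (2 - \<bar>u\<bar>)"
    using ln_one_plus_div_bound[OF s(1)] True by (simp add: s_def)
  finally show ?thesis .
qed (simp add: chi2_kernel_def)

lemma chi2_kernel_tendsto: "((\<lambda>\<kappa>. chi2_kernel \<kappa> u) \<longlongrightarrow> exp (- u\<^sup>2 / 2)) at_top"
proof -
  define \<psi> where "\<psi> s = (s\<^sup>2 - 1) * ln (1 + u / s) - s * u" for s :: real
  have "(\<psi> \<longlongrightarrow> - (u * u / 2)) at_top"
    unfolding \<psi>_def by real_asymp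
  moreover have "filterlim (\<lambda>\<kappa>::real. sqrt (\<kappa>/2)) at_top at_top" by real_asymp
  ultimately have "((\<lambda>\<kappa>. \<psi> (sqrt (\<kappa>/2))) \<longlongrightarrow> - (u * u / 2)) at_top"
    by (rule filterlim_compose)
  then have "((\<lambda>\<kappa>. exp (\<psi> (sqrt (\<kappa>/2)))) \<longlongrightarrow> exp (- u\<^sup>2 / 2)) at_top"
    unfolding power2_eq_square by (intro tendsto_exp) simp
  moreover have "\<forall>\<^sub>F \<kappa> in at_top. exp (\<psi> (sqrt (\<kappa>/2))) = chi2_kernel \<kappa> u"
    using eventually_gt_at_top[of "2 * u\<^sup>2"]
  proof eventually_elim
    case (elim \<kappa>)
    define s where "s = sqrt (\<kappa>/2)"
    have "0 \<le> 2 * u\<^sup>2" by simp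
    with elim have "0 < \<kappa>" by linarith
    then have s: "0 < s" "s\<^sup>2 = \<kappa>/2" by (simp_all add: s_def)
    have "\<bar>u\<bar> < s" using elim by (simp add: s_def real_less_rsqrt)
    then have "- s < u" "0 < 1 + u / s" using s(1) by (auto simp: field_simps)
    then have "chi2_kernel \<kappa> u = exp ((\<kappa>/2 - 1) * ln (1 + u / s)) * exp (- s * u)"
      by (simp add: chi2_kernel_def powr_def flip: s_def)
    also have "\<dots> = exp (\<psi> s)" by (simp add: \<psi>_def s(2) mult_exp_exp)
    finally show ?case by (simp add: s_def)
  qed
  ultimately show ?thesis by (rule Lim_transform_eventually)
qed

lemma integrable_exp_neg_abs: "integrable lborel (\<lambda>u::real. exp (- \<bar>u\<bar>))"
proof -
  define f where "f u = indicator {0<..} u * exp (- (u * 1))" for u :: real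
  have "integrable lborel f"
    using integrable_I0i_exp_mscale[of 1] unfolding set_integrable_def f_def[abs_def] by simp
  moreover from this have "integrable lborel (\<lambda>u. f (0 + (-1) * u))"
    by (rule lborel_integrable_real_affine) simp
  moreover have "integrable lborel (indicator {0} :: real \<Rightarrow> real)"
    by (rule integrable_real_indicator) auto
  ultimately have "integrable lborel (\<lambda>u. f u + f (0 + (-1) * u) + indicator {0} u)"
    by (auto intro!: Bochner_Integration.integrable_add)
  then show ?thesis
    by (rule Bochner_Integration.integrable_bound)
       (auto simp: f_def indicator_def not_less abs_if)
qed

lemma tendsto_integral_chi2_kernel:
  assumes [measurable]: "g \<in> borel_measurable borel" and bounded: "\<And>u. \<bar>g u\<bar> \<le> 1"
  shows "((\<lambda>\<kappa>. \<integral>u. g u * chi2_kernel \<kappa> u \<partial>lborel)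
           \<longlongrightarrow> (\<integral>u. g u * exp (- u\<^sup>2 / 2) \<partial>lborel)) at_top"
proof (rule integral_dominated_convergence_at_top[where w = "\<lambda>u. exp 2 * exp (- \<bar>u\<bar>)"])
  show "\<forall>\<^sub>F \<kappa> in at_top. AE u in lborel. norm (g u * chi2_kernel \<kappa> u) \<le> exp 2 * exp (- \<bar>u\<bar>)"
    using eventually_gt_at_top[of 2]
  proof eventually_elim
    case (elim \<kappa>)
    have "\<bar>g u\<bar> * chi2_kernel \<kappa> u \<le> 1 * exp (2 - \<bar>u\<bar>)" for u
      using bounded chi2_kernel_le[OF elim]
      by (intro mult_mono) (auto simp: chi2_kernel_def)
    then show ?case
      by (intro AE_I2) (simp add: abs_mult chi2_kernel_def exp_diff exp_minus field_simps)
  qed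
  show "AE u in lborel. ((\<lambda>\<kappa>. g u * chi2_kernel \<kappa> u) \<longlongrightarrow> g u * exp (- u\<^sup>2 / 2)) at_top"
    by (intro AE_I2 tendsto_mult_left chi2_kernel_tendsto)
qed (auto intro: integrable_mult_right integrable_exp_neg_abs)

lemma chi2_cdf_standardized_tendsto:
  "((\<lambda>\<kappa>. chi2_cdf \<kappa> (\<kappa> + sqrt (2 * \<kappa>) * z)) \<longlongrightarrow> Phi z) at_top"
proof -
  have gauss: "exp (- u\<^sup>2 / 2) = sqrt (2 * pi) * std_normal_density u" for u
    by (simp add: std_normal_density_def)
  have total: "(\<integral>u. 1 * exp (- u\<^sup>2 / 2) \<partial>lborel) = sqrt (2 * pi)"
    unfolding gauss by (simp only: mult_1 integral_mult_right_zero integral_normal_density mult_1_right)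
  have "((\<lambda>\<kappa>. (\<integral>u. indicator {..z} u * chi2_kernel \<kappa> u \<partial>lborel) / (\<integral>u. 1 * chi2_kernel \<kappa> u \<partial>lborel))
         \<longlongrightarrow> (\<integral>u. indicator {..z} u * exp (- u\<^sup>2 / 2) \<partial>lborel) / (\<integral>u. 1 * exp (- u\<^sup>2 / 2) \<partial>lborel))
        at_top"
    using total by (intro tendsto_divide tendsto_integral_chi2_kernel) auto
  moreover have "(\<integral>u. indicator {..z} u * exp (- u\<^sup>2 / 2) \<partial>lborel) = sqrt (2 * pi) * Phi z"
    unfolding gauss Phi_eq_integral by (subst mult.left_commute) (rule integral_mult_right_zero)
  ultimately have "((\<lambda>\<kappa>. (\<integral>u. indicator {..z} u * chi2_kernel \<kappa> u \<partial>lborel)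
                          / (\<integral>u. 1 * chi2_kernel \<kappa> u \<partial>lborel)) \<longlongrightarrow> Phi z) at_top"
    unfolding total by simp
  then show ?thesis
  proof (rule Lim_transform_eventually)
    show "\<forall>\<^sub>F \<kappa> in at_top. (\<integral>u. indicator {..z} u * chi2_kernel \<kappa> u \<partial>lborel)
            / (\<integral>u. 1 * chi2_kernel \<kappa> u \<partial>lborel) = chi2_cdf \<kappa> (\<kappa> + sqrt (2 * \<kappa>) * z)"
      using eventually_gt_at_top[of 0]
    proof eventually_elim
      case (elim \<kappa>)
      have "chi2_kernel_const \<kappa> * (\<integral>u. chi2_kernel \<kappa> u \<partial>lborel) = 1"
        by (rule chi2_kernel_normalized[OF elim])
      then show ?case
        unfolding chi2_cdf_standardized[OF elim] mult_1
        by (metis div_by_1 mult_divide_mult_cancel_left_if mult_zero_left zero_neq_one)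
    qed
  qed
qed

lemma chi2_quantile_standardized_tendsto:
  assumes "0 < q" "q < 1"
  shows "((\<lambda>\<kappa>. (chi2_quantile \<kappa> q - \<kappa>) / sqrt (2 * \<kappa>)) \<longlongrightarrow> Phi_inv q) at_top"
proof -
  have "\<forall>\<^sub>F \<kappa> in at_top. mono (chi2_cdf \<kappa>) \<and> 0 < sqrt (2 * \<kappa>)"
    using eventually_gt_at_top[of 0] by eventually_elim (simp add: mono_chi2_cdf)
  then show ?thesis
    unfolding chi2_quantile_def
    by (intro standardized_quantile_tendsto[OF _ _ chi2_cdf_standardized_tendsto
          Phi_inv_bounds[OF assms]]) (auto elim: eventually_mono)
qed

lemma chi2_cdf_rescaled_tendsto:
  assumes "0 < c" and w: "(w \<longlongrightarrow> w0) at_top"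
  shows "((\<lambda>\<kappa>. chi2_cdf (c * \<kappa>) (c * \<kappa> + sqrt (2 * (c * \<kappa>)) * w \<kappa>)) \<longlongrightarrow> Phi w0) at_top"
proof (rule standardized_cdf_tendsto_compose[OF _ _ _ w isCont_Phi])
  show "\<forall>\<^sub>F \<kappa> in at_top. mono (chi2_cdf (c * \<kappa>))"
    using eventually_gt_at_top[of 0] by eventually_elim (simp add: assms(1) mono_chi2_cdf)
  show "\<forall>\<^sub>F \<kappa> in at_top. 0 \<le> sqrt (2 * (c * \<kappa>))"
    using eventually_gt_at_top[of 0] by eventually_elim (simp add: assms(1) less_imp_le)
  show "((\<lambda>\<kappa>. chi2_cdf (c * \<kappa>) (c * \<kappa> + sqrt (2 * (c * \<kappa>)) * z)) \<longlongrightarrow> Phi z) at_top" for z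
    using filterlim_compose[OF chi2_cdf_standardized_tendsto
        filterlim_tendsto_pos_mult_at_top[OF tendsto_const assms(1) filterlim_ident]]
    by (simp add: o_def)
qed

section \<open>The chi-squared quantile pooled p-value\<close>

lemma chi_pool_standardized:
  assumes "0 < real M" "0 < \<kappa>"
  shows "chi_pool M p \<kappa> = 1 - chi2_cdf (real M * \<kappa>) (real M * \<kappa> + sqrt (2 * (real M * \<kappa>)) *
           ((1 / sqrt (real M)) * (\<Sum>i=1..M. (chi2_quantile \<kappa> (1 - p i) - \<kappa>) / sqrt (2 * \<kappa>))))"
proof -
  define w where "w i = (chi2_quantile \<kappa> (1 - p i) - \<kappa>) / sqrt (2 * \<kappa>)" for i
  have scale: "sqrt (2 * (real M * \<kappa>)) * (1 / sqrt (real M)) = sqrt (2 * \<kappa>)"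
    using assms by (simp add: real_sqrt_mult)
  have "(\<Sum>i=1..M. chi2_quantile \<kappa> (1 - p i)) = (\<Sum>i=1..M. \<kappa> + sqrt (2 * \<kappa>) * w i)"
    using assms by (simp add: w_def)
  also have "\<dots> = real M * \<kappa> + sqrt (2 * \<kappa>) * (\<Sum>i=1..M. w i)"
    by (simp add: sum.distrib sum_distrib_left)
  also have "\<dots> = real M * \<kappa> + sqrt (2 * (real M * \<kappa>)) * ((1 / sqrt (real M)) * (\<Sum>i=1..M. w i))"
    unfolding scale[symmetric] by (simp only: mult.assoc)
  finally show ?thesis by (simp add: chi_pool_def w_def)
qed

theorem mainTheorem7:
  fixes M :: nat and p :: "nat \<Rightarrow> real"
  assumes "M \<ge> 1"
    and "\<forall>i\<in>{1..M}. 0 < p i \<and> p i < 1"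
  shows "((\<lambda>\<kappa>. chi_pool M p \<kappa>) \<longlongrightarrow> Sto M p) at_top
     \<and> Sto M p = 1 - Phi ((1 / sqrt (real M)) * (\<Sum>i=1..M. Phi_inv (1 - p i)))"
proof
  show Sto: "Sto M p = 1 - Phi ((1 / sqrt (real M)) * (\<Sum>i=1..M. Phi_inv (1 - p i)))"
    by (simp add: Sto_def)
  have M: "0 < real M" using assms(1) by simp
  have "((\<lambda>\<kappa>. (1 / sqrt (real M)) * (\<Sum>i=1..M. (chi2_quantile \<kappa> (1 - p i) - \<kappa>) / sqrt (2 * \<kappa>)))
          \<longlongrightarrow> (1 / sqrt (real M)) * (\<Sum>i=1..M. Phi_inv (1 - p i))) at_top"
    using assms(2) by (intro tendsto_mult_left tendsto_sum chi2_quantile_standardized_tendsto) auto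
  from chi2_cdf_rescaled_tendsto[OF M this]
  have "((\<lambda>\<kappa>. 1 - chi2_cdf (real M * \<kappa>) (real M * \<kappa> + sqrt (2 * (real M * \<kappa>)) *
           ((1 / sqrt (real M)) * (\<Sum>i=1..M. (chi2_quantile \<kappa> (1 - p i) - \<kappa>) / sqrt (2 * \<kappa>)))))
         \<longlongrightarrow> Sto M p) at_top"
    unfolding Sto by (intro tendsto_diff tendsto_const)
  then show "((\<lambda>\<kappa>. chi_pool M p \<kappa>) \<longlongrightarrow> Sto M p) at_top"
    by (rule Lim_transform_eventually[OF _ eventually_mono[OF eventually_gt_at_top[of 0]
          chi_pool_standardized[OF M, THEN sym]]])
qed

end
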